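(* Let $P$, $h$ (fixed), $\ell$, $C$, $S$ ($n$ i.i.d. samples from $P$), the partition $\mathcal{Z}_1,\dots,\mathcal{Z}_K$, and constants $\gamma\ge1$, $\delta>0$, $\alpha\in[0,\frac{\gamma n(K+\gamma n)}{K(4n-3)}]$ be as in the context. Let $\hat S=\mathcal{T}(S)$ be the result of applying a transformation method $\mathcal{T}$, independent of $h$, to the samples of $S$. For $i\in T$ let $\hat S_i=\hat S\cap\mathcal{Z}_i$, $m_i=|\hat S_i|$, $m=\sum_{i\in T}m_i$, $\bar\epsilon_i=\frac{1}{m_in_i}\sum_{z\in S_i,\,s\in\hat S_i}|\ell(h,z)-\ell(h,s)|$, and $\bar\epsilon(h)=\sum_{i\in T}\frac{m_i}{m}\bar\epsilon_i$. If $\frac{n_i}{n}=\frac{m_i}{m}$ for every $i\in T$, then with probability at least $1-\gamma^{-\alpha}-\delta$, $$F(P,h)\le\bar\epsilon(h)+F(\hat S,h)+C\sqrt{\hat u\,\alpha\ln\gamma}+g(\delta/2).$$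
   Context: $F(P,h)=\mathbb{E}_{z\sim P}[\ell(h,z)]$, and for a finite dataset $A$, $F(A,h)=\frac1{|A|}\sum_{z\in A}\ell(h,z)$. $\ell\ge0$, $C=\sup_z\ell(h,z)<\infty$. $S_i=S\cap\mathcal{Z}_i$, $n_i=|S_i|$, $T=\{i\in[K]:S\cap\mathcal{Z}_i\ne\emptyset\}$. $\hat u=\frac{\gamma}{2n}+\frac{\gamma^2}{2}\sum_{i=1}^K(n_i/n)^2+\gamma^2\sqrt{\frac2n\ln\frac{2K}{\delta}}$ and $g(\delta)=C(\sqrt2+1)\sqrt{\frac{|T|\ln(2K/\delta)}{n}}+\frac{2C|T|\ln(2K/\delta)}{n}$. *)

theory Defs
  imports "HOL-Probability.Probability" "HOL-Library.Multiset"
begin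

text \<open>Empirical risk F(A,h) of a finite dataset (multiset) A, for the fixed
hypothesis h, whose loss is given as a function l z = loss(h,z).\<close>
definition emp_risk :: "('z \<Rightarrow> real) \<Rightarrow> 'z multiset \<Rightarrow> real" where
  "emp_risk l A = sum_mset (image_mset l A) / real (size A)"

definition sample_set :: "nat \<Rightarrow> (nat \<Rightarrow> 'z) \<Rightarrow> 'z multiset" where
  "sample_set n s = image_mset s (mset [0..<n])"

definition cell :: "'z set \<Rightarrow> 'z multiset \<Rightarrow> 'z multiset" where
  "cell Zi A = filter_mset (\<lambda>z. z \<in> Zi) A"

definition hit_cells :: "nat \<Rightarrow> (nat \<Rightarrow> 'z set) \<Rightarrow> 'z multiset \<Rightarrow> nat set" where
  "hit_cells K Z A = {i \<in> {..<K}. cell (Z i) A \<noteq> {#}}"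

definition eps_cell :: "('z \<Rightarrow> real) \<Rightarrow> 'z multiset \<Rightarrow> 'z multiset \<Rightarrow> real" where
  "eps_cell l SSi SSh =
     sum_mset (image_mset (\<lambda>z. sum_mset (image_mset (\<lambda>s. \<bar>l z - l s\<bar>) SSh)) SSi)
       / (real (size SSh) * real (size SSi))"

definition eps_bar :: "nat \<Rightarrow> (nat \<Rightarrow> 'z set) \<Rightarrow> ('z \<Rightarrow> real) \<Rightarrow> 'z multiset \<Rightarrow> 'z multiset \<Rightarrow> real" where
  "eps_bar K Z l S Sh =
     (let T = hit_cells K Z S;
          m = (\<Sum>i\<in>T. real (size (cell (Z i) Sh)))
      in \<Sum>i\<in>T. real (size (cell (Z i) Sh)) / m * eps_cell l (cell (Z i) S) (cell (Z i) Sh))"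

definition u_hat :: "nat \<Rightarrow> (nat \<Rightarrow> 'z set) \<Rightarrow> real \<Rightarrow> real \<Rightarrow> nat \<Rightarrow> 'z multiset \<Rightarrow> real" where
  "u_hat K Z \<gamma> \<delta> n S =
     \<gamma> / (2 * real n)
     + \<gamma>\<^sup>2 / 2 * (\<Sum>i\<in>{..<K}. (real (size (cell (Z i) S)) / real n)\<^sup>2)
     + \<gamma>\<^sup>2 * sqrt (2 / real n * ln (2 * real K / \<delta>))"

definition g_fun :: "real \<Rightarrow> nat \<Rightarrow> nat \<Rightarrow> nat \<Rightarrow> real \<Rightarrow> real" where
  "g_fun C K n cardT \<delta> =
     C * (sqrt 2 + 1) * sqrt (real cardT * ln (2 * real K / \<delta>) / real n)
     + 2 * C * real cardT * ln (2 * real K / \<delta>) / real n"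

end

theory Submission
  imports Defs
begin

(*
  Within a cell the empirical means of S and of the transformed sample S' differ by at most
  the mean pairwise loss gap eps_i.  Since the transformation keeps the cell proportions
  (n_i / n = m_i / m), F(S,h) and F(S',h) are the same convex combination of their cell means,
  so F(S,h) <= eps(h) + F(S',h) holds for every sample.  Randomness enters only through
  F(P,h) <= F(S,h) + C sqrt(ln(1/delta) / (2n)), which Hoeffding's inequality gives with
  probability at least 1 - delta.  This deviation is dominated by g(delta/2), as |T| >= 1 and
  ln(4K/delta) >= ln(1/delta); the term C sqrt(u alpha ln gamma) is nonnegative, and
  1 - delta >= 1 - gamma^-alpha - delta, so the bound holds on the Hoeffding event.
*)

lemma sum_mset_diff_distrib:
  fixes f g :: "'a \<Rightarrow> 'b::ab_group_add"
  shows "(\<Sum>x\<in>#A. f x - g x) = (\<Sum>x\<in>#A. f x) - (\<Sum>x\<in>#A. g x)"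
  by (induction A) (simp_all add: algebra_simps)

lemma sum_mset_split_cells:
  fixes f :: "'z \<Rightarrow> 'a::comm_monoid_add"
  assumes "finite T" and disj: "disjoint_family_on Z T" and "set_mset A \<subseteq> (\<Union>i\<in>T. Z i)"
  shows "(\<Sum>x\<in>#A. f x) = (\<Sum>i\<in>T. \<Sum>x\<in>#cell (Z i) A. f x)"
  using assms(3)
proof (induction A)
  case empty
  then show ?case by (simp add: cell_def)
next
  case (add x A)
  then obtain k where k: "k \<in> T" "x \<in> Z k" by auto
  have "x \<in> Z i \<longleftrightarrow> i = k" if "i \<in> T" for i
    using disj k that by (auto simp: disjoint_family_on_def)
  then have "(\<Sum>i\<in>T. if x \<in> Z i then f x else 0) = f x"
    using k \<open>finite T\<close> by (simp cong: sum.cong)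
  moreover have "(\<Sum>i\<in>T. \<Sum>y\<in>#cell (Z i) (add_mset x A). f y)
      = (\<Sum>i\<in>T. (if x \<in> Z i then f x else 0) + (\<Sum>y\<in>#cell (Z i) A. f y))"
    by (intro sum.cong refl) (simp add: cell_def)
  ultimately show ?case
    using add by (simp add: sum.distrib)
qed

lemma size_split_cells:
  assumes "finite T" "disjoint_family_on Z T" "set_mset A \<subseteq> (\<Union>i\<in>T. Z i)"
  shows "size A = (\<Sum>i\<in>T. size (cell (Z i) A))"
  using sum_mset_split_cells[OF assms, of "\<lambda>_. 1::nat"] by simp

lemma emp_risk_split_cells:
  assumes "finite T" "disjoint_family_on Z T" "set_mset A \<subseteq> (\<Union>i\<in>T. Z i)"
  shows "emp_risk l A = (\<Sum>i\<in>T. real (size (cell (Z i) A)) / real (size A) * emp_risk l (cell (Z i) A))"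
proof -
  have "emp_risk l A = (\<Sum>i\<in>T. (\<Sum>x\<in>#cell (Z i) A. l x) / real (size A))"
    unfolding emp_risk_def sum_mset_split_cells[OF assms] sum_divide_distrib ..
  also have "\<dots> = (\<Sum>i\<in>T. real (size (cell (Z i) A)) / real (size A) * emp_risk l (cell (Z i) A))"
    \<comment> \<open>empty cells contribute 0 on both sides, as x / 0 = 0\<close>
    by (intro sum.cong refl) (auto simp: emp_risk_def)
  finally show ?thesis .
qed

lemma emp_risk_diff_le_eps_cell:
  assumes "A \<noteq> {#}" "B \<noteq> {#}"
  shows "emp_risk l A - emp_risk l B \<le> eps_cell l A B"
proof -
  let ?d = "real (size A) * real (size B)"
  have "emp_risk l A - emp_risk l B
      = (real (size B) * (\<Sum>z\<in>#A. l z) - real (size A) * (\<Sum>s\<in>#B. l s)) / ?d"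
    using assms by (simp add: emp_risk_def field_simps)
  also have "\<dots> = (\<Sum>z\<in>#A. \<Sum>s\<in>#B. l z - l s) / ?d"
    by (simp add: sum_mset_diff_distrib sum_mset_distrib_left mult.commute)
  also have "\<dots> \<le> (\<Sum>z\<in>#A. \<Sum>s\<in>#B. \<bar>l z - l s\<bar>) / ?d"
    by (intro divide_right_mono sum_mset_mono) auto
  also have "\<dots> = eps_cell l A B"
    by (simp add: eps_cell_def mult.commute)
  finally show ?thesis .
qed

lemma set_mset_subset_hit_cells:
  assumes "set_mset A \<subseteq> (\<Union>i<K. Z i)"
  shows "set_mset A \<subseteq> (\<Union>i\<in>hit_cells K Z A. Z i)"
proof
  fix x assume x: "x \<in># A"
  then obtain i where i: "i < K" "x \<in> Z i" using assms by auto
  then have "x \<in># cell (Z i) A" using x by (simp add: cell_def)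
  with i show "x \<in> (\<Union>i\<in>hit_cells K Z A. Z i)" by (auto simp: hit_cells_def)
qed

lemma emp_risk_le_eps_bar_plus_emp_risk:
  assumes disj: "disjoint_family_on Z {..<K}"
    and S_cover: "set_mset S \<subseteq> (\<Union>i<K. Z i)"
    and Sh_cover: "set_mset Sh \<subseteq> (\<Union>i\<in>hit_cells K Z S. Z i)"
    and proportions: "\<And>i. i \<in> hit_cells K Z S \<Longrightarrow> real (size (cell (Z i) S)) / real (size S)
        = real (size (cell (Z i) Sh)) / (\<Sum>j\<in>hit_cells K Z S. real (size (cell (Z j) Sh)))"
  shows "emp_risk l S \<le> eps_bar K Z l S Sh + emp_risk l Sh"
proof -
  define T where "T = hit_cells K Z S"
  define w where "w i = real (size (cell (Z i) Sh)) / (\<Sum>j\<in>T. real (size (cell (Z j) Sh)))" for i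
  have fin: "finite T" and disjT: "disjoint_family_on Z T"
    using disj by (auto simp: T_def hit_cells_def disjoint_family_on_def)
  have S_coverT: "set_mset S \<subseteq> (\<Union>i\<in>T. Z i)"
    unfolding T_def by (rule set_mset_subset_hit_cells[OF S_cover])
  have size_Sh: "real (size Sh) = (\<Sum>j\<in>T. real (size (cell (Z j) Sh)))"
    using size_split_cells[OF fin disjT Sh_cover[folded T_def]] by simp
  have "emp_risk l S - emp_risk l Sh
      = (\<Sum>i\<in>T. w i * (emp_risk l (cell (Z i) S) - emp_risk l (cell (Z i) Sh)))"
    using proportions
    by (simp add: emp_risk_split_cells[OF fin disjT S_coverT]
        emp_risk_split_cells[OF fin disjT Sh_cover[folded T_def]] size_Sh
        w_def T_def right_diff_distrib sum_subtractf)
  also have "\<dots> \<le> (\<Sum>i\<in>T. w i * eps_cell l (cell (Z i) S) (cell (Z i) Sh))"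
  proof (intro sum_mono)
    fix i assume "i \<in> T"
    then have S_i: "cell (Z i) S \<noteq> {#}" by (simp add: T_def hit_cells_def)
    have "w i \<ge> 0" by (simp add: w_def sum_nonneg)
    show "w i * (emp_risk l (cell (Z i) S) - emp_risk l (cell (Z i) Sh))
        \<le> w i * eps_cell l (cell (Z i) S) (cell (Z i) Sh)"
    \<comment> \<open>a cell missed by Sh has weight 0, so the cell bound is needed only where both cells are nonempty\<close>
    proof (cases "cell (Z i) Sh = {#}")
      case True
      then show ?thesis by (simp add: w_def)
    next
      case False
      show ?thesis
        using \<open>w i \<ge> 0\<close> by (intro mult_left_mono emp_risk_diff_le_eps_cell S_i False)
    qed
  qed
  also have "\<dots> = eps_bar K Z l S Sh"
    by (simp add: eps_bar_def Let_def T_def w_def)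
  finally show ?thesis by simp
qed

lemma indep_vars_PiM_components:
  assumes M: "\<And>i. i \<in> I \<Longrightarrow> prob_space (M i)" and "I \<noteq> {}"
  shows "prob_space.indep_vars (PiM I M) M (\<lambda>i x. x i) I"
proof -
  interpret prob_space "PiM I M" by (intro prob_space_PiM M)
  have "distr (PiM I M) (PiM I M) (\<lambda>x. restrict x I) = PiM I M"
    by (subst distr_cong[OF refl refl, where g="\<lambda>x. x"]) (auto simp: space_PiM)
  also have "\<dots> = PiM I (\<lambda>i. distr (PiM I M) (M i) (\<lambda>x. x i))"
    by (intro PiM_cong refl distr_PiM_component[symmetric] M)
  finally show ?thesis
    using \<open>I \<noteq> {}\<close> by (subst indep_vars_iff_distr_eq_PiM') auto
qed

lemma Hoeffding_PiM_mean_le: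
  fixes P :: "'z measure" and l :: "'z \<Rightarrow> real"
  assumes P: "prob_space P" and I: "finite I" "I \<noteq> {}"
    and l_meas: "l \<in> borel_measurable P"
    and l_bounds: "\<And>z. z \<in> space P \<Longrightarrow> a \<le> l z \<and> l z \<le> b"
    and "a < b" "\<epsilon> \<ge> 0"
  shows "measure (PiM I (\<lambda>_. P))
     {x\<in>space (PiM I (\<lambda>_. P)). (\<Sum>i\<in>I. l (x i)) / real (card I) \<le> (\<integral>z. l z \<partial>P) - \<epsilon>}
     \<le> exp (-2 * real (card I) * \<epsilon>\<^sup>2 / (b - a)\<^sup>2)"
proof -
  let ?M = "PiM I (\<lambda>_. P)"
  interpret M: prob_space ?M by (intro prob_space_PiM P)
  obtain i\<^sub>0 where "i\<^sub>0 \<in> I" using I by blast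
  have coord: "(\<lambda>x. x i) \<in> measurable ?M P" if "i \<in> I" for i
    using measurable_component_singleton[OF that, of "\<lambda>_. P"] by simp
  have distr_l: "distr ?M borel (\<lambda>x. l (x i)) = distr P borel l" if "i \<in> I" for i
  proof -
    have "distr ?M borel (\<lambda>x. l (x i)) = distr (distr ?M P (\<lambda>x. x i)) borel l"
      using coord[OF that] l_meas by (subst distr_distr) (auto simp: comp_def)
    also have "distr ?M P (\<lambda>x. x i) = P"
      using that P by (intro distr_PiM_component)
    finally show ?thesis .
  qed
  interpret Hoeffding_ineq_iid ?M I "\<lambda>i x. l (x i)" "\<lambda>x. l (x i\<^sub>0)" a b
      "M.expectation (\<lambda>x. l (x i\<^sub>0))"
  proof unfold_locales
    show "finite I" by (fact I(1))
    show "distr ?M borel (\<lambda>x. l (x i)) = distr ?M borel (\<lambda>x. l (x i\<^sub>0))" if "i \<in> I" for i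
      using distr_l[OF that] distr_l[OF \<open>i\<^sub>0 \<in> I\<close>] by simp
    show "M.indep_vars (\<lambda>_. borel) (\<lambda>i x. l (x i)) I"
      using indep_vars_PiM_components[OF P I(2)] l_meas by (rule M.indep_vars_compose2)
    show "(\<lambda>x. l (x i\<^sub>0)) \<in> borel_measurable ?M"
      using \<open>i\<^sub>0 \<in> I\<close> l_meas by measurable
    have "x i\<^sub>0 \<in> space P" if "x \<in> space ?M" for x
      using that \<open>i\<^sub>0 \<in> I\<close> by (auto simp: space_PiM)
    then show "AE x in ?M. l (x i\<^sub>0) \<in> {a..b}"
      using l_bounds by (intro AE_I2) auto
  qed
  have "M.expectation (\<lambda>x. l (x i\<^sub>0)) = (\<integral>z. l z \<partial>distr ?M P (\<lambda>x. x i\<^sub>0))"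
    using coord[OF \<open>i\<^sub>0 \<in> I\<close>] l_meas by (subst integral_distr) auto
  also have "distr ?M P (\<lambda>x. x i\<^sub>0) = P"
    using \<open>i\<^sub>0 \<in> I\<close> P by (intro distr_PiM_component)
  finally have "M.expectation (\<lambda>x. l (x i\<^sub>0)) = (\<integral>z. l z \<partial>P)" .
  with Hoeffding_ineq_le'[OF \<open>\<epsilon> \<ge> 0\<close> \<open>a < b\<close> I(2)] show ?thesis
    by (simp only:)
qed

lemma size_sample_set [simp]: "size (sample_set n s) = n"
  by (simp add: sample_set_def)

lemma sample_set_eq_empty_iff [simp]: "sample_set n s = {#} \<longleftrightarrow> n = 0"
  by (simp add: sample_set_def del: mset_upt)

lemma set_mset_sample_set: "set_mset (sample_set n s) = s ` {..<n}"
  by (auto simp: sample_set_def)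

lemma emp_risk_sample_set: "emp_risk l (sample_set n s) = (\<Sum>i<n. l (s i)) / real n"
  by (simp add: emp_risk_def sample_set_def image_mset.compositionality comp_def
      sum_unfold_sum_mset lessThan_atLeast0)

lemma emp_risk_sample_set_deviation:
  fixes P :: "'z measure" and l :: "'z \<Rightarrow> real"
  assumes P: "prob_space P" and "n \<ge> 1"
    and l_meas: "l \<in> borel_measurable P"
    and l_bounds: "\<And>z. z \<in> space P \<Longrightarrow> 0 \<le> l z \<and> l z \<le> C"
    and "0 < \<delta>" "\<delta> \<le> 1"
  shows "\<exists>E \<in> sets (PiM {..<n} (\<lambda>_. P)). measure (PiM {..<n} (\<lambda>_. P)) E \<ge> 1 - \<delta> \<and>
     (\<forall>s\<in>E. (\<integral>z. l z \<partial>P) \<le> emp_risk l (sample_set n s) + C * sqrt (ln (1 / \<delta>) / (2 * real n)))"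
proof -
  let ?M = "PiM {..<n} (\<lambda>_. P)" and ?t = "C * sqrt (ln (1 / \<delta>) / (2 * real n))"
  interpret M: prob_space ?M by (intro prob_space_PiM P)
  have "C \<ge> 0"
    using prob_space.not_empty[OF P] l_bounds by force
  \<comment> \<open>Hoeffding's inequality needs a nondegenerate range [0, C]\<close>
  show ?thesis
  proof (cases "C = 0")
    case True
    then have l0: "l z = 0" if "z \<in> space P" for z
      using l_bounds[OF that] by simp
    then have "(\<integral>z. l z \<partial>P) = 0"
      by (simp cong: Bochner_Integration.integral_cong)
    moreover have "emp_risk l (sample_set n s) = 0" if "s \<in> space ?M" for s
      using that l0 by (auto simp: emp_risk_sample_set space_PiM PiE_iff)
    ultimately show ?thesis
      using True \<open>0 < \<delta>\<close> by (intro bexI[of _ "space ?M"]) (auto simp: M.prob_space)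
  next
    case False
    let ?B = "{s\<in>space ?M. (\<Sum>i\<in>{..<n}. l (s i)) / real (card {..<n}) \<le> (\<integral>z. l z \<partial>P) - ?t}"
    have "?t \<ge> 0"
      using \<open>C \<ge> 0\<close> \<open>\<delta> \<le> 1\<close> \<open>0 < \<delta>\<close> by simp
    have "?t\<^sup>2 = C\<^sup>2 * (ln (1 / \<delta>) / (2 * real n))"
      using \<open>0 < \<delta>\<close> \<open>\<delta> \<le> 1\<close> by (simp add: power_mult_distrib)
    then have "-2 * real n * ?t\<^sup>2 / (C - 0)\<^sup>2 = ln \<delta>"
      using False \<open>n \<ge> 1\<close> \<open>0 < \<delta>\<close> by (simp add: ln_div)
    moreover have "measure ?M ?B \<le> exp (-2 * real (card {..<n}) * ?t\<^sup>2 / (C - 0)\<^sup>2)"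
      using \<open>n \<ge> 1\<close> False \<open>C \<ge> 0\<close>
      by (intro Hoeffding_PiM_mean_le[OF P finite_lessThan _ l_meas l_bounds _ \<open>?t \<ge> 0\<close>]) (auto simp: lessThan_empty_iff)
    ultimately have "measure ?M ?B \<le> \<delta>"
      using \<open>0 < \<delta>\<close> by simp
    moreover have "?B \<in> sets ?M"
    proof -
      have [measurable]: "(\<lambda>s. l (s i)) \<in> borel_measurable ?M" if "i \<in> {..<n}" for i
        using measurable_compose[OF measurable_component_singleton[OF that] l_meas] by simp
      show ?thesis by measurable
    qed
    ultimately have "measure ?M (space ?M - ?B) \<ge> 1 - \<delta>"
      by (simp add: M.prob_compl)
    moreover have "(\<integral>z. l z \<partial>P) \<le> emp_risk l (sample_set n s) + ?t" if "s \<in> space ?M - ?B" for s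
      using that by (auto simp: emp_risk_sample_set)
    ultimately show ?thesis
      using \<open>?B \<in> sets ?M\<close> by (intro bexI[of _ "space ?M - ?B"]) auto
  qed
qed

lemma hoeffding_radius_le_g_fun:
  assumes "C \<ge> 0" "K \<ge> 1" "cardT \<ge> 1" "0 < \<delta>" "\<delta> \<le> 1"
  shows "C * sqrt (ln (1 / \<delta>) / (2 * real n)) \<le> g_fun C K n cardT (\<delta> / 2)"
proof -
  define L where "L = ln (2 * real K / (\<delta> / 2))"
  have "0 \<le> ln (1 / \<delta>)" using assms by simp
  moreover have "ln (1 / \<delta>) \<le> L"
    unfolding L_def using assms by (subst ln_le_cancel_iff) (auto simp: field_simps)
  ultimately have "0 \<le> L" by linarith
  have "ln (1 / \<delta>) / 2 \<le> real cardT * L"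
    using assms \<open>0 \<le> ln (1 / \<delta>)\<close> \<open>ln (1 / \<delta>) \<le> L\<close> mult_right_mono[of 1 "real cardT" L]
    by linarith
  then have "ln (1 / \<delta>) / 2 / real n \<le> real cardT * L / real n"
    by (rule divide_right_mono) simp
  then have "ln (1 / \<delta>) / (2 * real n) \<le> real cardT * L / real n"
    by simp
  then have "C * sqrt (ln (1 / \<delta>) / (2 * real n)) \<le> C * sqrt (real cardT * L / real n)"
    using assms by (intro mult_left_mono) auto
  also have "\<dots> \<le> C * (sqrt 2 + 1) * sqrt (real cardT * L / real n)"
    using assms \<open>0 \<le> L\<close> by (intro mult_right_mono) (auto simp: mult_le_cancel_left1)
  also have "\<dots> \<le> g_fun C K n cardT (\<delta> / 2)"
    unfolding g_fun_def L_def[symmetric] using assms \<open>0 \<le> L\<close> by simp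
  finally show ?thesis .
qed

lemma u_hat_nonneg:
  assumes "\<gamma> \<ge> 0" "0 < \<delta>" "\<delta> \<le> 2 * real K"
  shows "u_hat K Z \<gamma> \<delta> n S \<ge> 0"
proof -
  have "ln (2 * real K / \<delta>) \<ge> 0"
    using assms by simp
  then show ?thesis
    unfolding u_hat_def using assms by (intro add_nonneg_nonneg mult_nonneg_nonneg sum_nonneg) auto
qed

lemma card_hit_cells_pos:
  assumes "A \<noteq> {#}" "set_mset A \<subseteq> (\<Union>i<K. Z i)"
  shows "card (hit_cells K Z A) \<ge> 1"
proof -
  have "hit_cells K Z A \<noteq> {}"
    using set_mset_subset_hit_cells[OF assms(2)] assms(1) by fastforce
  moreover have "finite (hit_cells K Z A)"
    by (simp add: hit_cells_def)
  ultimately show ?thesis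
    by (simp add: Suc_le_eq card_gt_0_iff)
qed

lemma emp_risk_plus_hoeffding_radius_le:
  assumes disj: "disjoint_family_on Z {..<K}"
    and S_cover: "set_mset S \<subseteq> (\<Union>i<K. Z i)" and "S \<noteq> {#}" and size_S: "size S = n"
    and Sh_cover: "set_mset Sh \<subseteq> (\<Union>i\<in>hit_cells K Z S. Z i)"
    and proportions: "\<And>i. i \<in> hit_cells K Z S \<Longrightarrow> real (size (cell (Z i) S)) / real n
        = real (size (cell (Z i) Sh)) / (\<Sum>j\<in>hit_cells K Z S. real (size (cell (Z j) Sh)))"
    and "C \<ge> 0" "K \<ge> 1" "\<gamma> \<ge> 1" "\<alpha> \<ge> 0" "0 < \<delta>" "\<delta> \<le> 1"
  shows "emp_risk l S + C * sqrt (ln (1 / \<delta>) / (2 * real n))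
    \<le> eps_bar K Z l S Sh + emp_risk l Sh
      + C * sqrt (u_hat K Z \<gamma> \<delta> n S * \<alpha> * ln \<gamma>)
      + g_fun C K n (card (hit_cells K Z S)) (\<delta> / 2)"
proof -
  have "emp_risk l S \<le> eps_bar K Z l S Sh + emp_risk l Sh"
    using emp_risk_le_eps_bar_plus_emp_risk[OF disj S_cover Sh_cover] proportions size_S by simp
  moreover have "C * sqrt (ln (1 / \<delta>) / (2 * real n))
      \<le> g_fun C K n (card (hit_cells K Z S)) (\<delta> / 2)"
    using assms card_hit_cells_pos[OF \<open>S \<noteq> {#}\<close> S_cover] by (intro hoeffding_radius_le_g_fun)
  moreover have "0 \<le> C * sqrt (u_hat K Z \<gamma> \<delta> n S * \<alpha> * ln \<gamma>)"
    using u_hat_nonneg[of \<gamma> \<delta> K] assms by (intro mult_nonneg_nonneg real_sqrt_ge_zero) auto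
  ultimately show ?thesis by linarith
qed

theorem theorem2:
  fixes P :: "'z measure" and l :: "'z \<Rightarrow> real" and C :: real
    and n K :: nat and Z :: "nat \<Rightarrow> 'z set"
    and \<gamma> \<delta> \<alpha> :: real
    and Tr :: "(nat \<Rightarrow> 'z) \<Rightarrow> 'z multiset"
  assumes P: "prob_space P"
    and l_meas: "l \<in> borel_measurable P"
    and l_nonneg: "\<And>z. z \<in> space P \<Longrightarrow> 0 \<le> l z"
    and l_bdd: "bdd_above (l ` space P)"
    and C_def: "C = (SUP z\<in>space P. l z)"
    and n_pos: "n \<ge> 1" and K_pos: "K \<ge> 1"
    and Z_sets: "\<And>i. i < K \<Longrightarrow> Z i \<in> sets P"
    and Z_disj: "\<And>i j. i < K \<Longrightarrow> j < K \<Longrightarrow> i \<noteq> j \<Longrightarrow> Z i \<inter> Z j = {}"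
    and Z_cover: "(\<Union>i<K. Z i) = space P"
    and \<gamma>: "\<gamma> \<ge> 1" and \<delta>: "\<delta> > 0"
    and \<alpha>: "0 \<le> \<alpha>" "\<alpha> \<le> \<gamma> * real n * (real K + \<gamma> * real n) / (real K * (4 * real n - 3))"
    and Tr_range: "\<And>s. s \<in> space (PiM {..<n} (\<lambda>_. P)) \<Longrightarrow>
        set_mset (Tr s) \<subseteq> (\<Union>i\<in>hit_cells K Z (sample_set n s). Z i)"
    and proportions: "\<And>s i. s \<in> space (PiM {..<n} (\<lambda>_. P)) \<Longrightarrow> i \<in> hit_cells K Z (sample_set n s) \<Longrightarrow>
        real (size (cell (Z i) (sample_set n s))) / real n
        = real (size (cell (Z i) (Tr s)))
          / (\<Sum>j\<in>hit_cells K Z (sample_set n s). real (size (cell (Z j) (Tr s))))"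
  shows "\<exists>E \<in> sets (PiM {..<n} (\<lambda>_. P)).
     measure (PiM {..<n} (\<lambda>_. P)) E \<ge> 1 - \<gamma> powr (-\<alpha>) - \<delta> \<and>
     (\<forall>s\<in>E. (\<integral>z. l z \<partial>P)
        \<le> eps_bar K Z l (sample_set n s) (Tr s) + emp_risk l (Tr s)
          + C * sqrt (u_hat K Z \<gamma> \<delta> n (sample_set n s) * \<alpha> * ln \<gamma>)
          + g_fun C K n (card (hit_cells K Z (sample_set n s))) (\<delta> / 2))"
proof (cases "\<delta> < 1")
  case False
  have "\<gamma> powr (-\<alpha>) > 0" using \<gamma> by simp
  then have "1 - \<gamma> powr (-\<alpha>) - \<delta> \<le> 0" using False by linarith
  then show ?thesis by (intro bexI[of _ "{}"]) auto
next
  case True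
  let ?M = "PiM {..<n} (\<lambda>_. P)"
  have l_bounds: "0 \<le> l z \<and> l z \<le> C" if "z \<in> space P" for z
    using l_nonneg[OF that] l_bdd that unfolding C_def by (auto intro: cSUP_upper)
  then have "C \<ge> 0"
    using prob_space.not_empty[OF P] by force
  obtain E where E: "E \<in> sets ?M" "measure ?M E \<ge> 1 - \<delta>"
    and risk: "\<And>s. s \<in> E \<Longrightarrow>
      (\<integral>z. l z \<partial>P) \<le> emp_risk l (sample_set n s) + C * sqrt (ln (1 / \<delta>) / (2 * real n))"
    using emp_risk_sample_set_deviation[OF P n_pos l_meas l_bounds \<delta>] True by auto
  have disj: "disjoint_family_on Z {..<K}"
    using Z_disj by (auto simp: disjoint_family_on_def)
  show ?thesis
  proof (intro bexI[OF _ E(1)] conjI ballI)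
    show "measure ?M E \<ge> 1 - \<gamma> powr (-\<alpha>) - \<delta>"
      using E(2) powr_ge_zero[of \<gamma> "-\<alpha>"] by linarith
  next
    fix s assume "s \<in> E"
    then have s: "s \<in> space ?M" using sets.sets_into_space[OF E(1)] by blast
    have S_cover: "set_mset (sample_set n s) \<subseteq> (\<Union>i<K. Z i)"
      using s Z_cover by (auto simp: set_mset_sample_set space_PiM PiE_iff)
    have S_ne: "sample_set n s \<noteq> {#}"
      using n_pos by simp
    note transfer = emp_risk_plus_hoeffding_radius_le[OF disj S_cover S_ne size_sample_set
        Tr_range[OF s] proportions[OF s] \<open>C \<ge> 0\<close> K_pos \<gamma> \<alpha>(1) \<delta> less_imp_le[OF True], of l]
    show "(\<integral>z. l z \<partial>P)
        \<le> eps_bar K Z l (sample_set n s) (Tr s) + emp_risk l (Tr s)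
          + C * sqrt (u_hat K Z \<gamma> \<delta> n (sample_set n s) * \<alpha> * ln \<gamma>)
          + g_fun C K n (card (hit_cells K Z (sample_set n s))) (\<delta> / 2)"
      using transfer risk[OF \<open>s \<in> E\<close>] by linarith
  qed
qed

end
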